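(* Let $N\ge0$ and $\mathbf{X}:[0,T]\to T^N_\omega(A)$. Then $\mathbf{X}$ is an $N$-sqgrp if and only if $\hat{\mathbf{X}}:=\Phi_H^*\mathbf{X}$ is a weighted $N$-sgrp. Conversely, a path $\hat{\mathbf{X}}:[0,T]\to T^N_\omega(A)$ is a weighted $N$-sgrp if and only if $\mathbf{X}:=\Psi_H^*\hat{\mathbf{X}}$ is an $N$-sqgrp. The same holds for $N$-sqgrms (versus weighted $N$-sgrms), sqgrps (versus weighted sgrps) and sqgrms (versus weighted sgrms), with $\Phi_H^*,\Psi_H^*$ applied pointwise.
   Context: Alphabet $A$ with commutative bracket $\{\cdot,\cdot\}$ on $A\cup\{0\}$ ($\{a,0\}=0$, commutative, associative) and weight $\omega:A\to\{1,2,\dots\}$ with $\omega(\{a,b\})=\omega(a)+\omega(b)$ when $\{a,b\}\ne0$; $A$ has finitely many letters of each weight. Words $w=a_1\cdots a_n$ (incl. empty word $\mathbf{1}$), $\|w\|=\sum\omega(a_i)$, $\{a_1\cdots a_n\}$ the iterated bracket. $T_\omega(A)$: polynomials in words; $T_\omega((A))$: formal series; $\langle x,w\rangle$ coefficient of $w$; $\otimes$ concatenation. $T^N_\omega(A)$: span of words with $\|w\|\le N$, quotient algebra with product $\otimes_{N,\omega}$. Shuffle $\sqcup\!\sqcup$ and quasi-shuffle $\widehat{\sqcup\!\sqcup}$: bilinear, unit $\mathbf{1}$, $va\,\widehat{\sqcup\!\sqcup}\,wb=(v\,\widehat{\sqcup\!\sqcup}\,wb)a+(va\,\widehat{\sqcup\!\sqcup}\,w)b+(v\,\widehat{\sqcup\!\sqcup}\,w)\{a,b\}$,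 shuffle without the last term. Hoffman adjoint maps $\Phi^*_H,\Psi^*_H$: multiplicative on words (w.r.t. concatenation), $\Phi^*_H(a)=\sum_{n\ge1}\sum_{\{a_1\cdots a_n\}=a}\frac1{n!}a_1\cdots a_n$, $\Psi^*_H(a)=\sum_{n\ge1}\sum_{\{a_1\cdots a_n\}=a}\frac{(-1)^{n-1}}{n}a_1\cdots a_n$, extended linearly and coordinatewise to series; they preserve $\|\cdot\|$ (so act on $T^N_\omega(A)$). $N$-sqgrp: non-zero path $\mathbf{X}:[0,T]\to T^N_\omega(A)$ with $\langle\mathbf{X}_t,v\,\widehat{\sqcup\!\sqcup}\,w\rangle=\langle\mathbf{X}_t,v\rangle\langle\mathbf{X}_t,w\rangle$ for all $t$ and words with $\|v\|+\|w\|\le N$, and $t\mapsto\langle\mathbf{X}_t,w\rangle$ smooth for $\|w\|\le N$. $N$-sqgrm: non-zero map $[0,T]^2\to T^N_\omega(A)$ with this relation for each $\mathbf{X}_{s,t}$, $\mathbf{X}_{s,u}\otimes_{N,\omega}\mathbf{X}_{u,t}=\mathbf{X}_{s,t}$, and $t\mapsto\langle\mathbf{X}_{s,t},w\rangle$ smooth. sqgrp/sqgrm: same with values in $T_\omega((A))$, all words, and $\otimes$. Weighted ($N$-)sgrp/sgrm: the same definitions with $\sqcup\!\sqcup$ in place of $\widehat{\sqcup\!\sqcup}$. *)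

theory Defs
  imports "HOL-Analysis.Analysis"
begin

text \<open>Words over the alphabet 'a are lists; formal series (and truncated tensors) are
  coefficient functions 'a list => real.  The bracket on A \<union> {0} is modelled as
  br :: 'a => 'a => 'a option, with None playing the role of 0.\<close>

type_synonym 'a series = "'a list \<Rightarrow> real"

definition wnorm :: "('a \<Rightarrow> nat) \<Rightarrow> 'a list \<Rightarrow> nat" where
  "wnorm wt w = sum_list (map wt w)"

fun ibr :: "('a \<Rightarrow> 'a \<Rightarrow> 'a option) \<Rightarrow> 'a list \<Rightarrow> 'a option" where
  "ibr br [] = None"
| "ibr br [a] = Some a"
| "ibr br (a # b # w) = (case ibr br (b # w) of None \<Rightarrow> None | Some c \<Rightarrow> br a c)"

definition bracket_weight_ok :: "('a \<Rightarrow> 'a \<Rightarrow> 'a option) \<Rightarrow> ('a \<Rightarrow> nat) \<Rightarrow> bool" where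
  "bracket_weight_ok br wt \<longleftrightarrow>
     (\<forall>a b. br a b = br b a) \<and>
     (\<forall>a b d. (case br a b of None \<Rightarrow> None | Some c \<Rightarrow> br c d)
             = (case br b d of None \<Rightarrow> None | Some e \<Rightarrow> br a e)) \<and>
     (\<forall>a. wt a \<ge> 1) \<and>
     (\<forall>a b c. br a b = Some c \<longrightarrow> wt c = wt a + wt b) \<and>
     (\<forall>n. finite {a. wt a = n})"

text \<open>Quasi-shuffle and shuffle, as lists of words (all coefficients are natural numbers,
  a word appearing with multiplicity).  They are defined via last letters, by working on
  reversed words.\<close>
fun qshr :: "('a \<Rightarrow> 'a \<Rightarrow> 'a option) \<Rightarrow> 'a list \<Rightarrow> 'a list \<Rightarrow> 'a list list" where
  "qshr br [] w = [w]"
| "qshr br (a # v) [] = [a # v]"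
| "qshr br (a # v) (b # w) =
     map ((#) a) (qshr br v (b # w)) @ map ((#) b) (qshr br (a # v) w) @
     (case br a b of None \<Rightarrow> [] | Some c \<Rightarrow> map ((#) c) (qshr br v w))"

definition qsh :: "('a \<Rightarrow> 'a \<Rightarrow> 'a option) \<Rightarrow> 'a list \<Rightarrow> 'a list \<Rightarrow> 'a list list" where
  "qsh br v w = map rev (qshr br (rev v) (rev w))"

definition sh :: "'a list \<Rightarrow> 'a list \<Rightarrow> 'a list list" where
  "sh v w = qsh (\<lambda>_ _. None) v w"

text \<open>pairing <x, p> of a series with a polynomial given as a list of words\<close>
definition pair :: "'a series \<Rightarrow> 'a list list \<Rightarrow> real" where
  "pair x p = sum_list (map x p)"

definition cprod :: "'a series \<Rightarrow> 'a series \<Rightarrow> 'a series" where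
  "cprod x y w = (\<Sum>i\<le>length w. x (take i w) * y (drop i w))"

definition tprod :: "('a \<Rightarrow> nat) \<Rightarrow> nat \<Rightarrow> 'a series \<Rightarrow> 'a series \<Rightarrow> 'a series" where
  "tprod wt N x y w = (if wnorm wt w \<le> N then cprod x y w else 0)"

definition unit_series :: "'a series" where
  "unit_series w = (if w = [] then 1 else 0)"

definition trunc_space :: "('a \<Rightarrow> nat) \<Rightarrow> nat \<Rightarrow> 'a series set" where
  "trunc_space wt N = {x. \<forall>w. N < wnorm wt w \<longrightarrow> x w = 0}"

definition phi_letter :: "('a \<Rightarrow> 'a \<Rightarrow> 'a option) \<Rightarrow> 'a \<Rightarrow> 'a series" where
  "phi_letter br a u = (if u \<noteq> [] \<and> ibr br u = Some a then 1 / fact (length u) else 0)"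

definition psi_letter :: "('a \<Rightarrow> 'a \<Rightarrow> 'a option) \<Rightarrow> 'a \<Rightarrow> 'a series" where
  "psi_letter br a u = (if u \<noteq> [] \<and> ibr br u = Some a
      then (-1) ^ (length u - 1) / real (length u) else 0)"

definition word_map :: "('a \<Rightarrow> 'a series) \<Rightarrow> 'a list \<Rightarrow> 'a series" where
  "word_map L w = foldr (\<lambda>a acc. cprod (L a) acc) w unit_series"

text \<open>linear, coordinatewise extension: (L* X) at u = sum over words w of X(w) <L*(w), u>;
  only words of the same weight contribute (the maps preserve weight).\<close>
definition adj_map :: "('a \<Rightarrow> 'a series) \<Rightarrow> ('a \<Rightarrow> nat) \<Rightarrow> 'a series \<Rightarrow> 'a series" where
  "adj_map L wt X u = (\<Sum>w\<in>{w. wnorm wt w = wnorm wt u}. X w * word_map L w u)"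

definition PhiH :: "('a \<Rightarrow> 'a \<Rightarrow> 'a option) \<Rightarrow> ('a \<Rightarrow> nat) \<Rightarrow> 'a series \<Rightarrow> 'a series" where
  "PhiH br wt = adj_map (phi_letter br) wt"

definition PsiH :: "('a \<Rightarrow> 'a \<Rightarrow> 'a option) \<Rightarrow> ('a \<Rightarrow> nat) \<Rightarrow> 'a series \<Rightarrow> 'a series" where
  "PsiH br wt = adj_map (psi_letter br) wt"

text \<open>C^infinity on a set (one-sided derivatives at endpoints of an interval)\<close>
definition smooth_on_set :: "real set \<Rightarrow> (real \<Rightarrow> real) \<Rightarrow> bool" where
  "smooth_on_set S f \<longleftrightarrow> (\<exists>D :: nat \<Rightarrow> real \<Rightarrow> real.
      (\<forall>t\<in>S. D 0 t = f t) \<and>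
      (\<forall>n. \<forall>t\<in>S. (D n has_real_derivative D (Suc n) t) (at t within S)))"

definition N_grp :: "('a list \<Rightarrow> 'a list \<Rightarrow> 'a list list) \<Rightarrow> ('a \<Rightarrow> nat) \<Rightarrow> nat \<Rightarrow> real
     \<Rightarrow> (real \<Rightarrow> 'a series) \<Rightarrow> bool" where
  "N_grp P wt N T X \<longleftrightarrow>
     (\<forall>t\<in>{0..T}. X t \<in> trunc_space wt N \<and> X t \<noteq> (\<lambda>_. 0)) \<and>
     (\<forall>t\<in>{0..T}. \<forall>v w. wnorm wt v + wnorm wt w \<le> N \<longrightarrow>
         pair (X t) (P v w) = X t v * X t w) \<and>
     (\<forall>w. wnorm wt w \<le> N \<longrightarrow> smooth_on_set {0..T} (\<lambda>t. X t w))"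

definition N_grm :: "('a list \<Rightarrow> 'a list \<Rightarrow> 'a list list) \<Rightarrow> ('a \<Rightarrow> nat) \<Rightarrow> nat \<Rightarrow> real
     \<Rightarrow> (real \<Rightarrow> real \<Rightarrow> 'a series) \<Rightarrow> bool" where
  "N_grm P wt N T X \<longleftrightarrow>
     (\<forall>s\<in>{0..T}. \<forall>t\<in>{0..T}. X s t \<in> trunc_space wt N \<and> X s t \<noteq> (\<lambda>_. 0)) \<and>
     (\<forall>s\<in>{0..T}. \<forall>t\<in>{0..T}. \<forall>v w. wnorm wt v + wnorm wt w \<le> N \<longrightarrow>
         pair (X s t) (P v w) = X s t v * X s t w) \<and>
     (\<forall>s\<in>{0..T}. \<forall>u\<in>{0..T}. \<forall>t\<in>{0..T}. tprod wt N (X s u) (X u t) = X s t) \<and>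
     (\<forall>s\<in>{0..T}. \<forall>w. wnorm wt w \<le> N \<longrightarrow> smooth_on_set {0..T} (\<lambda>t. X s t w))"

definition grp :: "('a list \<Rightarrow> 'a list \<Rightarrow> 'a list list) \<Rightarrow> real
     \<Rightarrow> (real \<Rightarrow> 'a series) \<Rightarrow> bool" where
  "grp P T X \<longleftrightarrow>
     (\<forall>t\<in>{0..T}. X t \<noteq> (\<lambda>_. 0)) \<and>
     (\<forall>t\<in>{0..T}. \<forall>v w. pair (X t) (P v w) = X t v * X t w) \<and>
     (\<forall>w. smooth_on_set {0..T} (\<lambda>t. X t w))"

definition grm :: "('a list \<Rightarrow> 'a list \<Rightarrow> 'a list list) \<Rightarrow> real
     \<Rightarrow> (real \<Rightarrow> real \<Rightarrow> 'a series) \<Rightarrow> bool" where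
  "grm P T X \<longleftrightarrow>
     (\<forall>s\<in>{0..T}. \<forall>t\<in>{0..T}. X s t \<noteq> (\<lambda>_. 0)) \<and>
     (\<forall>s\<in>{0..T}. \<forall>t\<in>{0..T}. \<forall>v w. pair (X s t) (P v w) = X s t v * X s t w) \<and>
     (\<forall>s\<in>{0..T}. \<forall>u\<in>{0..T}. \<forall>t\<in>{0..T}. cprod (X s u) (X u t) = X s t) \<and>
     (\<forall>s\<in>{0..T}. \<forall>w. smooth_on_set {0..T} (\<lambda>t. X s t w))"

abbreviation "N_sqgrp br wt \<equiv> N_grp (qsh br) wt"
abbreviation "N_sgrp wt \<equiv> N_grp sh wt"
abbreviation "N_sqgrm br wt \<equiv> N_grm (qsh br) wt"
abbreviation "N_sgrm wt \<equiv> N_grm sh wt"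
abbreviation "sqgrp br \<equiv> grp (qsh br)"
abbreviation "sgrp \<equiv> grp sh"
abbreviation "sqgrm br \<equiv> grm (qsh br)"
abbreviation "sgrm \<equiv> grm sh"

end

theory Submission
  imports Defs "HOL-Computational_Algebra.Formal_Power_Series"
begin

text \<open>
  \<open>\<Phi>\<^sub>H\<^sup>*\<close> is adjoint to Hoffman's exponential, which turns shuffles into
  quasi-shuffles. Dually, pairing \<open>\<Phi>\<^sub>H\<^sup>* y\<close> with the shuffle of \<open>v\<close> and \<open>w\<close> gives the
  sum of \<open>\<langle>\<Phi>\<^sub>H\<^sup>* a, v\<rangle> \<langle>\<Phi>\<^sub>H\<^sup>* b, w\<rangle>\<close> over all words \<open>a, b\<close>, each counted as often as
  \<open>y\<close> occurs in the quasi-shuffle of \<open>a\<close> and \<open>b\<close>. This is proved by induction on \<open>y\<close>: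
  deconcatenation is a morphism for the shuffle, and for a single letter the identity comes
  down to the \<open>(|v| + |w|)! / (|v|! |w|!)\<close> shuffles of \<open>v\<close> and \<open>w\<close> all having the same
  bracket. Consequently \<open>\<Phi>\<^sub>H\<^sup>* \<otimes> \<Phi>\<^sub>H\<^sup>*\<close> maps the quasi-shuffle defects
  \<open>\<langle>X, qsh v w\<rangle> - X v X w\<close> of \<open>X\<close> to the shuffle defects of \<open>\<Phi>\<^sub>H\<^sup>* X\<close>.

  This change of variables is invertible: \<open>\<Psi>\<^sub>H\<^sup>*\<close> inverts \<open>\<Phi>\<^sub>H\<^sup>*\<close> because the letter
  coefficients \<open>1/n!\<close> and \<open>(-1)\<^sup>n\<^sup>-\<^sup>1/n\<close> are those of \<open>e\<^sup>x - 1\<close> and \<open>log (1 + x)\<close>, which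
  are compositional inverses. Both maps are induced by weight-preserving letter maps, so
  they are multiplicative for concatenation and act linearly on each coordinate; hence
  they also respect truncated products, truncation, non-vanishing and smoothness.
\<close>

section \<open>Weighted words and the concatenation product\<close>

lemma wnorm_Nil [simp]: "wnorm wt [] = 0"
  by (simp add: wnorm_def)

lemma wnorm_Cons [simp]: "wnorm wt (a # w) = wt a + wnorm wt w"
  by (simp add: wnorm_def)

lemma wnorm_append [simp]: "wnorm wt (v @ w) = wnorm wt v + wnorm wt w"
  by (simp add: wnorm_def)

lemma wnorm_rev [simp]: "wnorm wt (rev w) = wnorm wt w"
  by (induct w) auto

lemma wnorm_take_drop: "wnorm wt (take i w) + wnorm wt (drop i w) = wnorm wt w"
  by (metis append_take_drop_id wnorm_append)

lemma cprod_assoc: "cprod (cprod x y) z = cprod x (cprod y z)"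
proof
  fix w :: "'a list"
  define g where "g = (\<lambda>i j. x (take i w) * y (take j (drop i w)) * z (drop (i + j) w))"
  have "cprod (cprod x y) z w = (\<Sum>k\<le>length w. \<Sum>i\<le>k. g i (k - i))"
    unfolding cprod_def g_def
    by (auto simp: sum_distrib_right min_def take_drop intro!: sum.cong)
  also have "\<dots> = (\<Sum>(i, j)\<in>{(i, j). i + j \<le> length w}. g i j)"
    by (rule sum.triangle_reindex_eq[symmetric])
  also have "{(i, j). i + j \<le> length w} = Sigma {..length w} (\<lambda>i. {..length w - i})"
    by auto
  also have "(\<Sum>(i, j)\<in>Sigma {..length w} (\<lambda>i. {..length w - i}). g i j)
           = (\<Sum>i\<le>length w. \<Sum>j\<le>length w - i. g i j)"
    by (rule sum.Sigma[symmetric]) auto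
  also have "\<dots> = cprod x (cprod y z) w"
    unfolding cprod_def g_def
    by (auto simp: sum_distrib_left mult.assoc add.commute intro!: sum.cong)
  finally show "cprod (cprod x y) z w = cprod x (cprod y z) w" .
qed

lemma cprod_unit_left [simp]: "cprod unit_series x = x"
  by (rule ext) (simp add: cprod_def unit_series_def sum.atMost_shift)

lemma cprod_unit_right [simp]: "cprod x unit_series = x"
  by (rule ext) (simp add: cprod_def unit_series_def if_distrib[of "(*) _"] cong: if_cong)

lemma cprod_delta:
  "cprod (\<lambda>u. if u = v then 1 else 0) (\<lambda>u. if u = w then 1 else 0) = (\<lambda>u. if u = v @ w then 1 else 0)"
proof
  fix u :: "'a list"
  have "(\<Sum>i\<le>length u. (if take i u = v then 1 else 0) * (if drop i u = w then 1 else (0::real)))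
      = (\<Sum>i\<le>length u. if i = length v \<and> u = v @ w then 1 else 0)"
    by (intro sum.cong refl) (auto simp: append_eq_conv_conj[symmetric])
  thus "cprod (\<lambda>u. if u = v then 1 else 0) (\<lambda>u. if u = w then 1 else 0) u = (if u = v @ w then 1 else 0)"
    by (simp add: cprod_def)
qed

lemma word_map_Nil [simp]: "word_map L [] = unit_series"
  by (simp add: word_map_def)

lemma word_map_Cons: "word_map L (c # w) = cprod (L c) (word_map L w)"
  by (simp add: word_map_def)

lemma word_map_single [simp]: "word_map L [c] = L c"
  by (simp add: word_map_Cons)

lemma word_map_append: "word_map L (v @ w) = cprod (word_map L v) (word_map L w)"
  by (induct v) (simp_all add: word_map_Cons cprod_assoc)

lemma word_map_rev:
  assumes "\<And>c u. L c (rev u) = L c u"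
  shows "word_map L (rev y) (rev z) = word_map L y z"
proof (induct y arbitrary: z)
  case (Cons c y)
  have "word_map L (rev (c # y)) (rev z)
      = (\<Sum>k\<le>length z. word_map L (rev y) (rev (drop (length z - k) z)) * L c (rev (take (length z - k) z)))"
    by (simp add: word_map_append cprod_def take_rev drop_rev)
  also have "\<dots> = (\<Sum>k\<le>length z. L c (take (length z - k) z) * word_map L y (drop (length z - k) z))"
    by (simp add: Cons assms mult.commute)
  also have "\<dots> = word_map L (c # y) z"
    using sum.atLeastAtMost_rev[of "\<lambda>i. L c (take i z) * word_map L y (drop i z)" 0 "length z"]
    by (simp add: word_map_Cons cprod_def atMost_atLeast0)
  finally show ?case .
qed (simp add: unit_series_def)

lemma sum_list_concat: "sum_list (concat xss) = (\<Sum>xs\<leftarrow>xss. sum_list xs)"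
  by (induct xss) auto

lemma sum_list_sum_swap: "(\<Sum>x\<leftarrow>xs. \<Sum>i\<in>I. f x i) = (\<Sum>i\<in>I. \<Sum>x\<leftarrow>xs. f x i)"
  by (induct xs) (simp_all add: sum.distrib)

lemma sum_list_mult_sum_list:
  "(\<Sum>x\<leftarrow>xs. f x) * (\<Sum>y\<leftarrow>ys. g y) = (\<Sum>x\<leftarrow>xs. \<Sum>y\<leftarrow>ys. f x * g y)"
  for f :: "'a \<Rightarrow> 'c::semiring_0"
  by (simp add: sum_list_mult_const sum_list_const_mult)

lemma sum_list_delta_distinct:
  "distinct xs \<Longrightarrow> (\<Sum>p\<leftarrow>xs. if p = q then c else 0) = (if q \<in> set xs then c else 0)"
  by (induct xs) auto

lemma count_list_eq_sum_list: "count_list xs x = (\<Sum>z\<leftarrow>xs. if z = x then 1 else 0)"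
  by (induct xs) auto

lemma count_list_map_prepend_pairs:
  "count_list (map (\<lambda>(v, w). (v0 @ v, w0 @ w)) xs) (v1, w1) =
    (if take (length v0) v1 = v0 \<and> take (length w0) w1 = w0
     then count_list xs (drop (length v0) v1, drop (length w0) w1) else 0)"
proof (induct xs)
  case (Cons p xs)
  have "((v0 @ fst p, w0 @ snd p) = (v1, w1)) \<longleftrightarrow>
      take (length v0) v1 = v0 \<and> take (length w0) w1 = w0 \<and> p = (drop (length v0) v1, drop (length w0) w1)"
    by (cases p) (auto simp: append_eq_conv_conj)
  thus ?case using Cons by (auto simp: case_prod_unfold)
qed simp

lemma sum_list_map_eq_sum_count_support:
  fixes f :: "'a \<Rightarrow> 'b::comm_semiring_1"
  assumes "finite S" "\<And>x. x \<in> set xs \<Longrightarrow> f x \<noteq> 0 \<Longrightarrow> x \<in> S"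
  shows "(\<Sum>x\<leftarrow>xs. f x) = (\<Sum>x\<in>S. of_nat (count_list xs x) * f x)"
  using assms(2)
proof (induct xs)
  case (Cons y xs)
  have "(\<Sum>x\<in>S. of_nat (count_list (y # xs) x) * f x)
      = (\<Sum>x\<in>S. of_nat (count_list xs x) * f x) + (\<Sum>x\<in>S. if x = y then f x else 0)"
    unfolding sum.distrib[symmetric] by (intro sum.cong) (auto simp: algebra_simps)
  also have "(\<Sum>x\<in>S. if x = y then f x else 0) = f y"
    using Cons.prems[of y] assms(1) by (cases "y \<in> S") auto
  finally show ?case using Cons by (simp add: add.commute)
qed simp

section \<open>Shuffles\<close>

abbreviation shr :: "'a list \<Rightarrow> 'a list \<Rightarrow> 'a list list" where
  "shr \<equiv> qshr (\<lambda>_ _. None)"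

lemma qshr_Nil2 [simp]: "qshr bb v [] = [v]"
  by (cases v) auto

lemma sum_list_map_qshr:
  "(\<Sum>z\<leftarrow>qshr bb v w. F z) =
      (if v = [] \<and> w = [] then F [] else 0)
    + (case v of [] \<Rightarrow> 0 | a # v' \<Rightarrow> \<Sum>z\<leftarrow>qshr bb v' w. F (a # z))
    + (case w of [] \<Rightarrow> 0 | b # w' \<Rightarrow> \<Sum>z\<leftarrow>qshr bb v w'. F (b # z))
    + (case v of [] \<Rightarrow> 0 | a # v' \<Rightarrow> (case w of [] \<Rightarrow> 0 | b # w' \<Rightarrow>
         (case bb a b of None \<Rightarrow> 0 | Some c \<Rightarrow> \<Sum>z\<leftarrow>qshr bb v' w'. F (c # z))))"
  for F :: "'a list \<Rightarrow> 'b::comm_monoid_add"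
  by (cases v; cases w) (auto simp: o_def add.assoc split: option.split)

lemma sum_list_map_shr:
  "(\<Sum>z\<leftarrow>shr v w. F z) =
      (if v = [] \<and> w = [] then F [] else 0)
    + (case v of [] \<Rightarrow> 0 | a # v' \<Rightarrow> \<Sum>z\<leftarrow>shr v' w. F (a # z))
    + (case w of [] \<Rightarrow> 0 | b # w' \<Rightarrow> \<Sum>z\<leftarrow>shr v w'. F (b # z))"
  for F :: "'a list \<Rightarrow> 'b::comm_monoid_add"
  by (subst sum_list_map_qshr) (auto split: list.split)

lemma wnorm_qshr:
  "(\<And>a b c. bb a b = Some c \<Longrightarrow> wt c = wt a + wt b) \<Longrightarrow>
     z \<in> set (qshr bb v w) \<Longrightarrow> wnorm wt z = wnorm wt v + wnorm wt w"
  by (induct bb v w arbitrary: z rule: qshr.induct) (fastforce split: option.splits)+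

lemma wnorm_shr: "z \<in> set (shr v w) \<Longrightarrow> wnorm wt z = wnorm wt v + wnorm wt w"
  by (rule wnorm_qshr) auto

lemma mset_shr: "z \<in> set (shr v w) \<Longrightarrow> mset z = mset v + mset w"
proof (induct v arbitrary: w z)
  case (Cons a v)
  thus ?case by (induct w arbitrary: z) auto
qed simp

lemma length_shr: "length (shr v w) = (length v + length w) choose length v"
proof (induct v arbitrary: w)
  case (Cons a v)
  thus ?case by (induct w) auto
qed simp

definition split_shuffles_sum :: "('a list \<Rightarrow> 'a list \<Rightarrow> 'b::comm_monoid_add) \<Rightarrow> 'a list \<Rightarrow> 'a list \<Rightarrow> 'b" where
  "split_shuffles_sum H v w = (\<Sum>i\<le>length v. \<Sum>j\<le>length w.
     \<Sum>z1\<leftarrow>shr (take i v) (take j w). \<Sum>z2\<leftarrow>shr (drop i v) (drop j w). H z1 z2)"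

lemma split_shuffles_sum_Cons:
  "split_shuffles_sum H (a # v) (b # w) =
     (\<Sum>z\<leftarrow>shr (a # v) (b # w). H [] z)
   + split_shuffles_sum (\<lambda>z1. H (a # z1)) v (b # w)
   + split_shuffles_sum (\<lambda>z1. H (b # z1)) (a # v) w"
proof -
  define F where "F i j z1 = (\<Sum>z2\<leftarrow>shr (drop i (a # v)) (drop j (b # w)). H z1 z2)" for i j z1
  have F: "(\<Sum>z1\<leftarrow>shr (take i (a # v)) (take j (b # w)). F i j z1) =
      (if i = 0 then (if j = 0 then F 0 0 [] else 0) else 0)
    + (if i = 0 then 0 else \<Sum>z\<leftarrow>shr (take (i - 1) v) (take j (b # w)). F i j (a # z))
    + (if j = 0 then 0 else \<Sum>z\<leftarrow>shr (take i (a # v)) (take (j - 1) w). F i j (b # z))" for i j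
    by (cases i; cases j) (simp_all add: sum_list_map_shr[of "F _ _"] o_def)
  have first: "(\<Sum>i\<le>length (a # v). \<Sum>j\<le>length (b # w).
      if i = 0 then (if j = 0 then F 0 0 [] else 0) else 0) = F 0 0 []"
    by (simp add: sum.atMost_shift)
  show ?thesis
    unfolding split_shuffles_sum_def F_def[symmetric] F sum.distrib first
    by (simp add: F_def sum.atMost_Suc_shift del: sum.atMost_Suc)
qed

lemma sum_deconcat_Cons:
  "(\<Sum>j\<le>length (c # z). H (take j (c # z)) (drop j (c # z)))
   = H [] (c # z) + (\<Sum>j\<le>length z. H (c # take j z) (drop j z))"
  unfolding length_Cons sum.atMost_Suc_shift by simp

lemma sum_shr_deconcat:
  "(\<Sum>z\<leftarrow>shr v w. \<Sum>j\<le>length z. H (take j z) (drop j z)) = split_shuffles_sum H v w"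
proof (induct v arbitrary: w H)
  case Nil
  show ?case by (simp add: split_shuffles_sum_def)
next
  case (Cons a v)
  note IH = Cons.hyps
  show ?case
  proof (induct w arbitrary: H)
    case Nil
    show ?case by (simp add: split_shuffles_sum_def del: take_Suc_Cons drop_Suc_Cons)
  next
    case (Cons b w)
    let ?D = "\<lambda>H z. \<Sum>j\<le>length z. H (take j z) (drop j z)"
    have "(\<Sum>z\<leftarrow>shr (a # v) (b # w). ?D H z)
        = (\<Sum>z\<leftarrow>shr v (b # w). ?D H (a # z)) + (\<Sum>z\<leftarrow>shr (a # v) w. ?D H (b # z))"
      by (subst sum_list_map_shr) simp
    also have "\<dots> = ((\<Sum>z\<leftarrow>shr v (b # w). H [] (a # z)) + (\<Sum>z\<leftarrow>shr (a # v) w. H [] (b # z)))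
        + (\<Sum>z\<leftarrow>shr v (b # w). ?D (\<lambda>z1. H (a # z1)) z)
        + (\<Sum>z\<leftarrow>shr (a # v) w. ?D (\<lambda>z1. H (b # z1)) z)"
      unfolding sum_deconcat_Cons sum_list_addf by (simp add: algebra_simps)
    also have "(\<Sum>z\<leftarrow>shr v (b # w). H [] (a # z)) + (\<Sum>z\<leftarrow>shr (a # v) w. H [] (b # z))
        = (\<Sum>z\<leftarrow>shr (a # v) (b # w). H [] z)"
      by (simp add: sum_list_map_shr[of "H []"] o_def)
    finally show ?case
      unfolding split_shuffles_sum_Cons IH[of "\<lambda>z1. H (a # z1)" "b # w"] Cons.hyps[of "\<lambda>z1. H (b # z1)"] .
  qed
qed

section \<open>Exponential and logarithm as power series\<close>

definition nonconst_fps :: "(nat \<Rightarrow> real) \<Rightarrow> real fps" where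
  "nonconst_fps g = Abs_fps (\<lambda>k. if k = 0 then 0 else g k)"

lemma nonconst_fps_nth [simp]: "fps_nth (nonconst_fps g) k = (if k = 0 then 0 else g k)"
  by (simp add: nonconst_fps_def)

lemma nonconst_fps_power_nth_less: "l < n \<Longrightarrow> fps_nth (nonconst_fps g ^ n) l = 0"
proof (induct n arbitrary: l)
  case (Suc n)
  have "fps_nth (nonconst_fps g) i * fps_nth (nonconst_fps g ^ n) (l - i) = 0" if "i \<le> l" for i
    using Suc that by (cases i) auto
  thus ?case by (auto simp: fps_mult_nth intro!: sum.neutral)
qed simp

lemma nonconst_fps_exp: "nonconst_fps (\<lambda>k. 1 / fact k) = fps_exp 1 - 1"
  by (rule fps_ext) simp

lemma nonconst_fps_ln: "nonconst_fps (\<lambda>k. (-1) ^ (k - 1) / real k) = fps_ln 1"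
  by (rule fps_ext) (simp add: fps_ln_nth)

lemma fps_exp_minus_1_compose_ln: "nonconst_fps (\<lambda>k. 1 / fact k) oo nonconst_fps (\<lambda>k. (-1) ^ (k - 1) / real k) = fps_X"
  unfolding nonconst_fps_exp nonconst_fps_ln fps_ln_fps_exp_inv[of "1::real", simplified]
  by (rule fps_inv_right) simp_all

lemma fps_ln_compose_exp_minus_1: "nonconst_fps (\<lambda>k. (-1) ^ (k - 1) / real k) oo nonconst_fps (\<lambda>k. 1 / fact k) = fps_X"
  unfolding nonconst_fps_exp nonconst_fps_ln fps_ln_fps_exp_inv[of "1::real", simplified]
  by (rule fps_inv) simp_all

lemma smooth_on_set_const_zero: "smooth_on_set S (\<lambda>t. 0)"
  unfolding smooth_on_set_def by (rule exI[of _ "\<lambda>_ _. 0"]) auto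

lemma smooth_on_set_mult_const: "smooth_on_set S f \<Longrightarrow> smooth_on_set S (\<lambda>t. f t * c)"
  unfolding smooth_on_set_def
  by (elim exE, rule_tac x="\<lambda>n t. D n t * c" in exI) (auto intro: DERIV_cmult_right)

lemma smooth_on_set_add:
  "smooth_on_set S f \<Longrightarrow> smooth_on_set S g \<Longrightarrow> smooth_on_set S (\<lambda>t. f t + g t)"
  unfolding smooth_on_set_def
  by (elim exE, rule_tac x="\<lambda>n t. D n t + Da n t" in exI) (auto intro: derivative_intros)

lemma smooth_on_set_sum:
  "finite A \<Longrightarrow> (\<And>a. a \<in> A \<Longrightarrow> smooth_on_set S (f a)) \<Longrightarrow> smooth_on_set S (\<lambda>t. \<Sum>a\<in>A. f a t)"
  by (induct A rule: finite_induct) (auto intro: smooth_on_set_const_zero smooth_on_set_add)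

locale bracket_weight =
  fixes br :: "'a \<Rightarrow> 'a \<Rightarrow> 'a option" and wt :: "'a \<Rightarrow> nat"
  assumes bracket_weight_ok: "bracket_weight_ok br wt"
begin

lemma br_commute: "br a b = br b a"
  and br_assoc: "(case br a b of None \<Rightarrow> None | Some c \<Rightarrow> br c d)
                 = (case br b d of None \<Rightarrow> None | Some e \<Rightarrow> br a e)"
  and wt_pos: "1 \<le> wt a"
  and wt_br: "br a b = Some c \<Longrightarrow> wt c = wt a + wt b"
  and finite_wt_eq: "finite {a. wt a = n}"
  using bracket_weight_ok unfolding bracket_weight_ok_def by blast+

lemma finite_wt_le: "finite {a. wt a \<le> n}"
proof -
  have "{a. wt a \<le> n} = (\<Union>k\<le>n. {a. wt a = k})" by auto
  thus ?thesis using finite_wt_eq by auto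
qed

lemma length_le_wnorm: "length w \<le> wnorm wt w"
proof (induct w)
  case (Cons a w)
  thus ?case using wt_pos[of a] by simp
qed simp

definition words_of_weight :: "nat \<Rightarrow> 'a list set" where
  "words_of_weight n = {w. wnorm wt w = n}"

lemma words_of_weight_iff [simp]: "w \<in> words_of_weight n \<longleftrightarrow> wnorm wt w = n"
  by (simp add: words_of_weight_def)

lemma finite_words_of_weight [simp, intro]: "finite (words_of_weight n)"
proof (rule finite_subset)
  show "words_of_weight n \<subseteq> {w. set w \<subseteq> {a. wt a \<le> n} \<and> length w \<le> n}"
    using length_le_wnorm by (fastforce dest!: split_list)
  show "finite {w. set w \<subseteq> {a. wt a \<le> n} \<and> length w \<le> n}"
    by (rule finite_lists_length_le[OF finite_wt_le])
qed

lemma finite_words_of_weight_filter [simp]: "finite {w. wnorm wt w = n \<and> P w}"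
  by (rule finite_subset[OF _ finite_words_of_weight[of n]]) auto

definition br_opt :: "'a option \<Rightarrow> 'a option \<Rightarrow> 'a option" where
  "br_opt x y = (case (x, y) of (Some a, Some b) \<Rightarrow> br a b | _ \<Rightarrow> None)"

lemma br_opt_simps [simp]:
  "br_opt None y = None" "br_opt x None = None" "br_opt (Some a) (Some b) = br a b"
  by (auto simp: br_opt_def split: option.split)

lemma br_opt_commute: "br_opt x y = br_opt y x"
  by (auto simp: br_opt_def br_commute split: option.split)

lemma br_opt_assoc: "br_opt (br_opt x y) z = br_opt x (br_opt y z)"
proof (cases x; cases y; cases z)
  fix a b d assume "x = Some a" "y = Some b" "z = Some d"
  thus ?thesis using br_assoc[where a=a and b=b and d=d] by (auto simp: br_opt_def split: option.splits)
qed auto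

lemma br_opt_left_commute: "br_opt x (br_opt y z) = br_opt y (br_opt x z)"
  by (metis br_opt_assoc br_opt_commute)

lemma ibr_Cons: "u \<noteq> [] \<Longrightarrow> ibr br (a # u) = br_opt (Some a) (ibr br u)"
  by (cases u) (auto split: option.split)

lemma ibr_append: "v \<noteq> [] \<Longrightarrow> w \<noteq> [] \<Longrightarrow> ibr br (v @ w) = br_opt (ibr br v) (ibr br w)"
  by (induct v rule: list_nonempty_induct) (auto simp: ibr_Cons br_opt_assoc)

lemma ibr_mset_cong: "mset u = mset u' \<Longrightarrow> ibr br u = ibr br u'"
proof (induct u arbitrary: u')
  case (Cons a r)
  then obtain p q where u': "u' = p @ a # q"
    by (metis list.set_intros(1) set_mset_mset split_list)
  hence r: "mset r = mset (p @ q)" using Cons.prems by simp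
  show ?case
  proof (cases "r = []")
    case False
    hence "p @ q \<noteq> []" using r by auto
    hence "ibr br (a # r) = br_opt (Some a) (ibr br (p @ q))"
      using Cons.hyps[OF r] False by (simp add: ibr_Cons)
    also have "\<dots> = ibr br u'"
      using \<open>p @ q \<noteq> []\<close> unfolding u'
      by (cases "p = []"; cases "q = []")
         (simp_all add: ibr_append ibr_Cons br_opt_commute br_opt_left_commute)
    finally show ?thesis .
  qed (use r u' in simp)
qed simp

lemma ibr_rev [simp]: "ibr br (rev u) = ibr br u"
  by (rule ibr_mset_cong) simp

lemma wt_ibr: "ibr br u = Some c \<Longrightarrow> wt c = wnorm wt u"
proof (induct u arbitrary: c)
  case (Cons a u)
  show ?case
  proof (cases "u = []")
    case False
    then obtain c' where "ibr br u = Some c'" "br a c' = Some c"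
      using Cons.prems by (cases "ibr br u") (auto simp: ibr_Cons)
    thus ?thesis using Cons.hyps wt_br by simp
  qed (use Cons.prems in simp)
qed simp

end

section \<open>The coproduct dual to the quasi-shuffle\<close>

context bracket_weight
begin

lemma finite_br_preimage: "finite {(a, b). br a b = Some c}"
proof (rule finite_subset)
  show "{(a, b). br a b = Some c} \<subseteq> {a. wt a \<le> wt c} \<times> {a. wt a \<le> wt c}"
    using wt_br by fastforce
qed (simp add: finite_wt_le)

definition bracket_pairs :: "'a \<Rightarrow> ('a \<times> 'a) list" where
  "bracket_pairs c = (SOME xs. set xs = {(a, b). br a b = Some c} \<and> distinct xs)"

lemma set_bracket_pairs: "set (bracket_pairs c) = {(a, b). br a b = Some c}"
  and distinct_bracket_pairs: "distinct (bracket_pairs c)"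
  using someI_ex[OF finite_distinct_list[OF finite_br_preimage]]
  unfolding bracket_pairs_def by auto

definition qsh_coprod_letter :: "'a \<Rightarrow> ('a list \<times> 'a list) list" where
  "qsh_coprod_letter c = ([c], []) # ([], [c]) # map (\<lambda>(a, b). ([a], [b])) (bracket_pairs c)"

primrec qsh_coprod :: "'a list \<Rightarrow> ('a list \<times> 'a list) list" where
  "qsh_coprod [] = [([], [])]"
| "qsh_coprod (c # y) = concat (map (\<lambda>(v0, w0). map (\<lambda>(v, w). (v0 @ v, w0 @ w)) (qsh_coprod y))
                                  (qsh_coprod_letter c))"

lemma count_qshr_Nil: "count_list (qshr br v w) [] = (if v = [] \<and> w = [] then 1 else 0)"
  unfolding count_list_eq_sum_list by (subst sum_list_map_qshr) (auto split: list.split option.split)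

lemma count_qshr_Cons: "count_list (qshr br v w) (c # y) =
    (case v of [] \<Rightarrow> 0 | a # v' \<Rightarrow> if a = c then count_list (qshr br v' w) y else 0)
  + (case w of [] \<Rightarrow> 0 | b # w' \<Rightarrow> if b = c then count_list (qshr br v w') y else 0)
  + (case v of [] \<Rightarrow> 0 | a # v' \<Rightarrow> (case w of [] \<Rightarrow> 0 | b # w' \<Rightarrow>
       (if br a b = Some c then count_list (qshr br v' w') y else 0)))"
  unfolding count_list_eq_sum_list by (subst sum_list_map_qshr) (auto split: list.split option.split)

lemma count_qsh_coprod: "count_list (qsh_coprod y) (v, w) = count_list (qshr br v w) y"
proof (induct y arbitrary: v w)
  case Nil
  show ?case by (simp add: count_qshr_Nil)
next
  case (Cons c y)
  let ?shift = "\<lambda>v0 w0. count_list (map (\<lambda>(v, w). (v0 @ v, w0 @ w)) (qsh_coprod y)) (v, w)"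
  have "count_list (qsh_coprod (c # y)) (v, w)
      = ?shift [c] [] + ?shift [] [c] + (\<Sum>p\<leftarrow>bracket_pairs c. ?shift [fst p] [snd p])"
    by (simp add: qsh_coprod_letter_def count_list_concat o_def case_prod_unfold
             del: append_Cons append_Nil)
  also have "?shift [c] [] = (case v of [] \<Rightarrow> 0 | a # v' \<Rightarrow> if a = c then count_list (qsh_coprod y) (v', w) else 0)"
    unfolding count_list_map_prepend_pairs by (cases v) auto
  also have "?shift [] [c] = (case w of [] \<Rightarrow> 0 | b # w' \<Rightarrow> if b = c then count_list (qsh_coprod y) (v, w') else 0)"
    unfolding count_list_map_prepend_pairs by (cases w) auto
  also have "(\<Sum>p\<leftarrow>bracket_pairs c. ?shift [fst p] [snd p]) =
      (case v of [] \<Rightarrow> 0 | a # v' \<Rightarrow> (case w of [] \<Rightarrow> 0 | b # w' \<Rightarrow>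
         if br a b = Some c then count_list (qsh_coprod y) (v', w') else 0))"
  proof -
    have shift: "?shift [fst p] [snd p] = (if v \<noteq> [] \<and> w \<noteq> [] then
        (if p = (hd v, hd w) then count_list (qsh_coprod y) (tl v, tl w) else 0) else 0)" for p
      unfolding count_list_map_prepend_pairs by (cases v; cases w; cases p) auto
    show ?thesis
      unfolding shift
      using sum_list_delta_distinct[OF distinct_bracket_pairs, of "(hd v, hd w)"
          "count_list (qsh_coprod y) (tl v, tl w)"] set_bracket_pairs
      by (cases v; cases w) simp_all
  qed
  finally show ?case using Cons.hyps by (simp add: count_qshr_Cons split: list.split)
qed

end

section \<open>Hoffman's identity\<close>

context bracket_weight
begin

lemma phi_letter_rev [simp]: "phi_letter br c (rev u) = phi_letter br c u"
  by (simp add: phi_letter_def)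

lemma phi_letter_shr: "z \<in> set (shr v w) \<Longrightarrow> phi_letter br c z = phi_letter br c (v @ w)"
proof -
  assume "z \<in> set (shr v w)"
  hence "mset z = mset (v @ w)" using mset_shr by simp
  hence "ibr br z = ibr br (v @ w)" "length z = length (v @ w)"
    by (auto intro: ibr_mset_cong simp flip: size_mset)
  thus ?thesis unfolding phi_letter_def by (metis length_0_conv)
qed

lemma sum_bracket_pairs_phi_letter:
  assumes "v \<noteq> []" "w \<noteq> []"
  shows "(\<Sum>p\<leftarrow>bracket_pairs c. phi_letter br (fst p) v * phi_letter br (snd p) w)
       = (if ibr br (v @ w) = Some c then 1 / (fact (length v) * fact (length w)) else 0)"
proof (cases "ibr br v"; cases "ibr br w")
  fix x z assume x: "ibr br v = Some x" and z: "ibr br w = Some z"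
  hence "(\<Sum>p\<leftarrow>bracket_pairs c. phi_letter br (fst p) v * phi_letter br (snd p) w)
      = (\<Sum>p\<leftarrow>bracket_pairs c. if p = (x, z) then 1 / (fact (length v) * fact (length w)) else 0)"
    using assms by (auto simp: phi_letter_def intro!: arg_cong[where f=sum_list])
  also have "\<dots> = (if (x, z) \<in> set (bracket_pairs c) then 1 / (fact (length v) * fact (length w)) else 0)"
    by (rule sum_list_delta_distinct[OF distinct_bracket_pairs])
  finally show ?thesis using x z assms by (simp add: set_bracket_pairs ibr_append)
qed (use assms in \<open>auto simp: phi_letter_def ibr_append\<close>)

lemma sum_shr_phi_letter:
  "(\<Sum>z\<leftarrow>shr v w. phi_letter br c z) =
   (\<Sum>(v0, w0)\<leftarrow>qsh_coprod_letter c. word_map (phi_letter br) v0 v * word_map (phi_letter br) w0 w)"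
proof -
  have "(\<Sum>z\<leftarrow>shr v w. phi_letter br c z) = (\<Sum>z\<leftarrow>shr v w. phi_letter br c (v @ w))"
    using phi_letter_shr[of _ v w c] by (intro arg_cong[where f=sum_list] map_cong) auto
  hence L: "(\<Sum>z\<leftarrow>shr v w. phi_letter br c z) = real (length (shr v w)) * phi_letter br c (v @ w)"
    by (simp add: sum_list_triv)
  have R: "(\<Sum>(v0, w0)\<leftarrow>qsh_coprod_letter c. word_map (phi_letter br) v0 v * word_map (phi_letter br) w0 w)
     = phi_letter br c v * unit_series w + unit_series v * phi_letter br c w
     + (\<Sum>p\<leftarrow>bracket_pairs c. phi_letter br (fst p) v * phi_letter br (snd p) w)"
    by (simp add: qsh_coprod_letter_def o_def case_prod_unfold)
  show ?thesis
  proof (cases "v = [] \<or> w = []")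
    case True
    thus ?thesis unfolding L R by (auto simp: phi_letter_def unit_series_def)
  next
    case False
    have "real (length (shr v w)) * (1 / fact (length v + length w)) = 1 / (fact (length v) * fact (length w))"
      unfolding length_shr by (simp add: binomial_fact)
    thus ?thesis
      unfolding L R using False sum_bracket_pairs_phi_letter by (simp add: phi_letter_def unit_series_def)
  qed
qed

theorem sum_shr_word_map_phi:
  "(\<Sum>z\<leftarrow>shr v w. word_map (phi_letter br) y z) =
   (\<Sum>(v0, w0)\<leftarrow>qsh_coprod y. word_map (phi_letter br) v0 v * word_map (phi_letter br) w0 w)"
proof (induct y arbitrary: v w)
  case Nil
  show ?case by (simp add: unit_series_def sum_list_map_shr[of "\<lambda>z. if z = [] then 1 else 0"] split: list.split)
next
  case (Cons c y)
  let ?W = "word_map (phi_letter br)"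
  define A where "A p i j = ?W (fst p) (take i v) * ?W (snd p) (take j w)" for p i j
  define B where "B p i j = ?W (fst p) (drop i v) * ?W (snd p) (drop j w)" for p i j
  have "(\<Sum>z\<leftarrow>shr v w. ?W (c # y) z)
      = (\<Sum>z\<leftarrow>shr v w. \<Sum>k\<le>length z. phi_letter br c (take k z) * ?W y (drop k z))"
    by (simp add: word_map_Cons cprod_def)
  also have "\<dots> = (\<Sum>i\<le>length v. \<Sum>j\<le>length w.
      (\<Sum>z1\<leftarrow>shr (take i v) (take j w). phi_letter br c z1) * (\<Sum>z2\<leftarrow>shr (drop i v) (drop j w). ?W y z2))"
    unfolding sum_shr_deconcat[of "\<lambda>z1 z2. phi_letter br c z1 * ?W y z2"] split_shuffles_sum_def
    by (simp add: sum_list_const_mult sum_list_mult_const)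
  also have "\<dots> = (\<Sum>i\<le>length v. \<Sum>j\<le>length w.
      (\<Sum>p\<leftarrow>qsh_coprod_letter c. A p i j) * (\<Sum>q\<leftarrow>qsh_coprod y. B q i j))"
    unfolding sum_shr_phi_letter Cons A_def B_def by (simp add: case_prod_unfold)
  also have "\<dots> = (\<Sum>i\<le>length v. \<Sum>j\<le>length w.
      \<Sum>p\<leftarrow>qsh_coprod_letter c. \<Sum>q\<leftarrow>qsh_coprod y. A p i j * B q i j)"
    by (simp add: sum_list_mult_sum_list)
  also have "\<dots> = (\<Sum>p\<leftarrow>qsh_coprod_letter c. \<Sum>q\<leftarrow>qsh_coprod y.
      \<Sum>i\<le>length v. \<Sum>j\<le>length w. A p i j * B q i j)"
    by (simp add: sum_list_sum_swap)
  also have "\<dots> = (\<Sum>p\<leftarrow>qsh_coprod_letter c. \<Sum>q\<leftarrow>qsh_coprod y.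
      ?W (fst p @ fst q) v * ?W (snd p @ snd q) w)"
    unfolding word_map_append cprod_def A_def B_def sum_product
    by (intro arg_cong[where f=sum_list] map_cong refl sum.cong) (simp add: algebra_simps)
  also have "\<dots> = (\<Sum>(v0, w0)\<leftarrow>qsh_coprod (c # y). ?W v0 v * ?W w0 w)"
    by (simp add: map_concat sum_list_concat o_def case_prod_unfold)
  finally show ?case .
qed

end

context bracket_weight
begin

definition weight_preserving :: "('a \<Rightarrow> 'a series) \<Rightarrow> bool" where
  "weight_preserving L \<longleftrightarrow> (\<forall>c u. L c u \<noteq> 0 \<longrightarrow> wnorm wt u = wt c)"

lemma word_map_weight:
  assumes "weight_preserving L" and "word_map L y u \<noteq> 0"
  shows "wnorm wt u = wnorm wt y"
  using assms(2)
proof (induct y arbitrary: u)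
  case Nil
  thus ?case by (simp add: unit_series_def split: if_splits)
next
  case (Cons c y)
  then obtain i where "L c (take i u) \<noteq> 0" "word_map L y (drop i u) \<noteq> 0"
    unfolding word_map_Cons cprod_def by (metis (no_types, lifting) mult_zero_left mult_zero_right sum.neutral)
  hence "wnorm wt (take i u) = wt c" "wnorm wt (drop i u) = wnorm wt y"
    using assms(1) Cons.hyps unfolding weight_preserving_def by auto
  thus ?case by (metis wnorm_take_drop wnorm_Cons)
qed

lemma adj_map_apply: "adj_map L wt X u = (\<Sum>w\<in>words_of_weight (wnorm wt u). X w * word_map L w u)"
  by (simp add: adj_map_def words_of_weight_def)

definition weight_pairs :: "nat \<Rightarrow> ('a list \<times> 'a list) set" where
  "weight_pairs m = {(v, w). wnorm wt v + wnorm wt w = m}"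

lemma finite_weight_pairs: "finite (weight_pairs m)"
proof (rule finite_subset)
  show "weight_pairs m \<subseteq> (\<Union>k\<le>m. words_of_weight k) \<times> (\<Union>k\<le>m. words_of_weight k)"
    by (auto simp: weight_pairs_def)
qed auto

lemma sum_words_of_weight_deconcat:
  "(\<Sum>y\<in>words_of_weight m. \<Sum>j\<le>length y. F (take j y) (drop j y)) = (\<Sum>(v, w)\<in>weight_pairs m. F v w)"
proof -
  have "(\<Sum>y\<in>words_of_weight m. \<Sum>j\<le>length y. F (take j y) (drop j y))
      = (\<Sum>(y, j)\<in>Sigma (words_of_weight m) (\<lambda>y. {..length y}). F (take j y) (drop j y))"
    by (rule sum.Sigma) auto
  also have "\<dots> = (\<Sum>(v, w)\<in>weight_pairs m. F v w)"
    by (rule sum.reindex_bij_witness[where j="\<lambda>(y, j). (take j y, drop j y)" and i="\<lambda>(v, w). (v @ w, length v)"])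
       (auto simp: weight_pairs_def wnorm_take_drop)
  finally show ?thesis .
qed

lemma adj_map_cprod:
  assumes "weight_preserving L"
  shows "adj_map L wt (cprod X Y) = cprod (adj_map L wt X) (adj_map L wt Y)"
proof
  fix u
  let ?W = "word_map L" and ?P = "weight_pairs (wnorm wt u)"
  define F where "F i v w = X v * Y w * (?W v (take i u) * ?W w (drop i u))" for i v w
  have "adj_map L wt (cprod X Y) u = (\<Sum>y\<in>words_of_weight (wnorm wt u). \<Sum>j\<le>length y.
      (\<lambda>v w. X v * Y w * ?W (v @ w) u) (take j y) (drop j y))"
    by (simp add: adj_map_apply cprod_def sum_distrib_right)
  also have "\<dots> = (\<Sum>(v, w)\<in>?P. X v * Y w * ?W (v @ w) u)"
    by (rule sum_words_of_weight_deconcat)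
  also have "\<dots> = (\<Sum>i\<le>length u. \<Sum>(v, w)\<in>?P. F i v w)"
    unfolding word_map_append cprod_def F_def sum_distrib_left case_prod_unfold
    by (rule sum.swap)
  also have "\<dots> = (\<Sum>i\<le>length u. \<Sum>(v, w)\<in>words_of_weight (wnorm wt (take i u)) \<times> words_of_weight (wnorm wt (drop i u)). F i v w)"
  proof (rule sum.cong[OF refl])
    fix i
    let ?V = "words_of_weight (wnorm wt (take i u))" and ?W' = "words_of_weight (wnorm wt (drop i u))"
    show "(\<Sum>(v, w)\<in>?P. F i v w) = (\<Sum>(v, w)\<in>?V \<times> ?W'. F i v w)"
    proof (rule sum.mono_neutral_right[OF finite_weight_pairs])
      show "?V \<times> ?W' \<subseteq> ?P"
        using wnorm_take_drop[of wt i u] by (auto simp: weight_pairs_def)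
      show "\<forall>p\<in>?P - ?V \<times> ?W'. (case p of (v, w) \<Rightarrow> F i v w) = 0"
        using word_map_weight[OF assms] by (fastforce simp: F_def)
    qed
  qed
  also have "\<dots> = cprod (adj_map L wt X) (adj_map L wt Y) u"
    unfolding cprod_def adj_map_apply sum_product sum.cartesian_product F_def
    by (simp add: algebra_simps case_prod_unfold)
  finally show "adj_map L wt (cprod X Y) u = cprod (adj_map L wt X) (adj_map L wt Y) u" .
qed

lemma adj_map_tprod:
  assumes "weight_preserving L"
  shows "adj_map L wt (tprod wt N X Y) = tprod wt N (adj_map L wt X) (adj_map L wt Y)"
proof
  fix u
  have "adj_map L wt (tprod wt N X Y) u = (if wnorm wt u \<le> N then adj_map L wt (cprod X Y) u else 0)"
    by (simp add: adj_map_apply tprod_def)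
  thus "adj_map L wt (tprod wt N X Y) u = tprod wt N (adj_map L wt X) (adj_map L wt Y) u"
    by (simp add: adj_map_cprod[OF assms] tprod_def)
qed

lemma adj_map_unit: "adj_map L wt unit_series = unit_series"
proof
  fix u
  have "(\<Sum>w\<in>words_of_weight (wnorm wt u). unit_series w * word_map L w u)
      = (if [] \<in> words_of_weight (wnorm wt u) then unit_series u else 0)"
    by (simp add: unit_series_def if_distrib[of "\<lambda>x. x * _"] sum.delta' cong: if_cong)
  thus "adj_map L wt unit_series u = unit_series u"
    using length_le_wnorm[of u] by (auto simp: adj_map_apply unit_series_def)
qed

lemma adj_map_trunc_space: "X \<in> trunc_space wt N \<Longrightarrow> adj_map L wt X \<in> trunc_space wt N"
  by (simp add: trunc_space_def adj_map_apply)

lemma adj_map_word_map_delta: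
  assumes "weight_preserving L2" "\<And>c. adj_map L2 wt (L1 c) = (\<lambda>u. if u = [c] then 1 else 0)"
  shows "adj_map L2 wt (word_map L1 a) = (\<lambda>u. if u = a then 1 else 0)"
proof (induct a)
  case Nil
  show ?case by (simp add: adj_map_unit) (simp add: unit_series_def fun_eq_iff)
next
  case (Cons c a)
  show ?case
    unfolding word_map_Cons adj_map_cprod[OF assms(1)] assms(2) Cons cprod_delta by simp
qed

lemma adj_map_inverse:
  assumes "\<And>a. adj_map L2 wt (word_map L1 a) = (\<lambda>u. if u = a then 1 else 0)"
  shows "adj_map L2 wt (adj_map L1 wt X) = X"
proof
  fix u
  let ?A = "words_of_weight (wnorm wt u)"
  have "adj_map L2 wt (adj_map L1 wt X) u = (\<Sum>y\<in>?A. \<Sum>w\<in>?A. X w * word_map L1 w y * word_map L2 y u)"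
    by (simp add: adj_map_apply sum_distrib_right)
  also have "\<dots> = (\<Sum>w\<in>?A. X w * adj_map L2 wt (word_map L1 w) u)"
    by (subst sum.swap) (simp add: adj_map_apply sum_distrib_left mult.assoc)
  also have "\<dots> = X u"
    unfolding assms by (simp add: if_distrib[of "(*) _"] sum.delta' cong: if_cong)
  finally show "adj_map L2 wt (adj_map L1 wt X) u = X u" .
qed

definition smooth_coords :: "(nat \<Rightarrow> bool) \<Rightarrow> real set \<Rightarrow> (real \<Rightarrow> 'a series) \<Rightarrow> bool" where
  "smooth_coords Q S X \<longleftrightarrow> (\<forall>w. Q (wnorm wt w) \<longrightarrow> smooth_on_set S (\<lambda>t. X t w))"

lemma smooth_coords_adj_map: "smooth_coords Q S X \<Longrightarrow> smooth_coords Q S (\<lambda>t. adj_map L wt (X t))"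
  unfolding smooth_coords_def adj_map_apply
  by (auto intro!: smooth_on_set_sum smooth_on_set_mult_const)

end

section \<open>\<open>\<Psi>\<^sub>H\<^sup>*\<close> inverts \<open>\<Phi>\<^sub>H\<^sup>*\<close>\<close>

context bracket_weight
begin

definition bracket_letter :: "(nat \<Rightarrow> real) \<Rightarrow> 'a \<Rightarrow> 'a series" where
  "bracket_letter g c u = (if u \<noteq> [] \<and> ibr br u = Some c then g (length u) else 0)"

lemma phi_letter_eq: "phi_letter br = bracket_letter (\<lambda>n. 1 / fact n)"
  by (auto simp: fun_eq_iff bracket_letter_def phi_letter_def)

lemma psi_letter_eq: "psi_letter br = bracket_letter (\<lambda>n. (-1) ^ (n - 1) / real n)"
  by (auto simp: fun_eq_iff bracket_letter_def psi_letter_def)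

lemma weight_preserving_bracket_letter: "weight_preserving (bracket_letter g)"
  by (auto simp: weight_preserving_def bracket_letter_def wt_ibr split: if_splits)

lemma sum_bracket_letter:
  assumes "finite C" "{c. wt c = wnorm wt v} \<subseteq> C"
  shows "(\<Sum>c\<in>C. bracket_letter g c v * F c)
       = (if v = [] then 0 else g (length v) * (case ibr br v of None \<Rightarrow> 0 | Some c \<Rightarrow> F c))"
proof (cases "v \<noteq> [] \<and> ibr br v \<noteq> None")
  case True
  then obtain c0 where c0: "ibr br v = Some c0" by auto
  have "(\<Sum>c\<in>C. bracket_letter g c v * F c) = (\<Sum>c\<in>{c0}. bracket_letter g c v * F c)"
    using assms wt_ibr[OF c0] by (intro sum.mono_neutral_right) (auto simp: bracket_letter_def c0)
  thus ?thesis using True c0 by (simp add: bracket_letter_def)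
qed (auto simp: bracket_letter_def)

lemma sum_words_length_Suc:
  "(\<Sum>y\<in>{y \<in> words_of_weight m. length y = Suc n}. F y) =
   (\<Sum>c\<in>{c. wt c \<le> m}. \<Sum>y\<in>{y \<in> words_of_weight (m - wt c). length y = n}. F (c # y))"
proof -
  have "(\<Sum>c\<in>{c. wt c \<le> m}. \<Sum>y\<in>{y \<in> words_of_weight (m - wt c). length y = n}. F (c # y)) =
     (\<Sum>(c, y)\<in>Sigma {c. wt c \<le> m} (\<lambda>c. {y \<in> words_of_weight (m - wt c). length y = n}). F (c # y))"
    by (rule sum.Sigma) (auto intro: finite_wt_le)
  also have "\<dots> = (\<Sum>y\<in>{y \<in> words_of_weight m. length y = Suc n}. F y)"
    by (rule sum.reindex_bij_witness[where j="\<lambda>(c, y). c # y" and i="\<lambda>y. (hd y, tl y)"])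
       (auto simp: length_Suc_conv)
  finally show ?thesis by simp
qed

lemma sum_bracket_letter_split:
  assumes "h None = 0" "i < length u" "finite C" "{c. wt c = wnorm wt (take i u)} \<subseteq> C"
  shows "(\<Sum>c\<in>C. bracket_letter g c (take i u) * h (br_opt (Some c) (ibr br (drop i u))))
       = fps_nth (nonconst_fps g) i * h (ibr br u)"
proof (cases "i = 0")
  case False
  hence "take i u \<noteq> []" "drop i u \<noteq> []" using assms(2) by auto
  hence "ibr br u = br_opt (ibr br (take i u)) (ibr br (drop i u))"
    using ibr_append by (metis append_take_drop_id)
  thus ?thesis
    using sum_bracket_letter[OF assms(3,4)] False assms(1,2)
    by (simp split: option.split)
qed (simp add: bracket_letter_def)

lemma sum_word_map_length_Suc_Suc:
  assumes "weight_preserving L"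
  shows "(\<Sum>y\<in>{y \<in> words_of_weight (wnorm wt u). length y = Suc (Suc n)}. h (ibr br y) * word_map L y u)
    = (\<Sum>c\<in>{c. wt c \<le> wnorm wt u}. \<Sum>i\<le>length u. L c (take i u) *
        (\<Sum>y\<in>{y \<in> words_of_weight (wnorm wt (drop i u)). length y = Suc n}.
           h (br_opt (Some c) (ibr br y)) * word_map L y (drop i u)))"
proof -
  let ?m = "wnorm wt u" and ?Y = "\<lambda>k. {y \<in> words_of_weight k. length y = Suc n}"
  have Cons: "h (ibr br (c # y)) * word_map L (c # y) u
      = (\<Sum>i\<le>length u. L c (take i u) * (h (br_opt (Some c) (ibr br y)) * word_map L y (drop i u)))"
    if "length y = Suc n" for c y
  proof -
    have "y \<noteq> []" using that by auto
    thus ?thesis by (simp add: ibr_Cons word_map_Cons cprod_def sum_distrib_left mult.left_commute)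
  qed
  have expand: "(\<Sum>y\<in>?Y (?m - wt c). h (ibr br (c # y)) * word_map L (c # y) u)
      = (\<Sum>i\<le>length u. L c (take i u) * (\<Sum>y\<in>?Y (?m - wt c).
           h (br_opt (Some c) (ibr br y)) * word_map L y (drop i u)))" for c
  proof -
    have "(\<Sum>y\<in>?Y (?m - wt c). h (ibr br (c # y)) * word_map L (c # y) u)
        = (\<Sum>y\<in>?Y (?m - wt c). \<Sum>i\<le>length u.
             L c (take i u) * (h (br_opt (Some c) (ibr br y)) * word_map L y (drop i u)))"
      using Cons by (intro sum.cong) auto
    also have "\<dots> = (\<Sum>i\<le>length u. L c (take i u) * (\<Sum>y\<in>?Y (?m - wt c).
           h (br_opt (Some c) (ibr br y)) * word_map L y (drop i u)))"
      by (subst sum.swap) (simp add: sum_distrib_left)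
    finally show ?thesis .
  qed
  have shift: "?m - wt c = wnorm wt (drop i u)" if "L c (take i u) \<noteq> 0" for c i
    using assms that wnorm_take_drop[of wt i u] unfolding weight_preserving_def
    by (metis add_diff_cancel_left')
  show ?thesis
    unfolding sum_words_length_Suc[of _ ?m] expand
  proof (intro sum.cong refl)
    fix c i
    show "L c (take i u) * (\<Sum>y\<in>?Y (?m - wt c). h (br_opt (Some c) (ibr br y)) * word_map L y (drop i u))
        = L c (take i u) * (\<Sum>y\<in>?Y (wnorm wt (drop i u)). h (br_opt (Some c) (ibr br y)) * word_map L y (drop i u))"
      using shift[of c i] by (cases "L c (take i u) = 0") simp_all
  qed
qed

lemma sum_word_map_bracket_letter_length_1:
  assumes "h None = 0"
  shows "(\<Sum>y\<in>{y \<in> words_of_weight (wnorm wt u). length y = Suc 0}. h (ibr br y) * word_map (bracket_letter g) y u)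
       = h (ibr br u) * fps_nth (nonconst_fps g ^ Suc 0) (length u)"
proof -
  let ?m = "wnorm wt u"
  have "(\<Sum>y\<in>{y \<in> words_of_weight ?m. length y = Suc 0}. h (ibr br y) * word_map (bracket_letter g) y u)
      = (\<Sum>c\<in>{c. wt c \<le> ?m}. \<Sum>y\<in>{y \<in> words_of_weight (?m - wt c). length y = 0}.
           h (ibr br (c # y)) * word_map (bracket_letter g) (c # y) u)"
    by (rule sum_words_length_Suc)
  also have "\<dots> = (\<Sum>c\<in>{c. wt c \<le> ?m}. bracket_letter g c u * h (Some c))"
  proof (intro sum.cong refl)
    fix c assume "c \<in> {c. wt c \<le> ?m}"
    hence "{y \<in> words_of_weight (?m - wt c). length y = 0} = (if wt c = ?m then {[]} else {})"
      by auto
    moreover have "wt c \<noteq> ?m \<Longrightarrow> bracket_letter g c u = 0"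
      using weight_preserving_bracket_letter[of g] unfolding weight_preserving_def by metis
    ultimately show "(\<Sum>y\<in>{y \<in> words_of_weight (?m - wt c). length y = 0}.
           h (ibr br (c # y)) * word_map (bracket_letter g) (c # y) u) = bracket_letter g c u * h (Some c)"
      by auto
  qed
  also have "\<dots> = h (ibr br u) * fps_nth (nonconst_fps g ^ Suc 0) (length u)"
  proof -
    have "{c. wt c = ?m} \<subseteq> {c. wt c \<le> ?m}" by auto
    from sum_bracket_letter[OF finite_wt_le this, of g "\<lambda>c. h (Some c)"] show ?thesis
      using assms by (cases "ibr br u") auto
  qed
  finally show ?thesis .
qed

text \<open>The coefficient of \<open>x\<^sup>l\<close> in \<^term>\<open>nonconst_fps g ^ n\<close> sums \<open>g l\<^sub>1 \<cdots> g l\<^sub>n\<close> over the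
  compositions \<open>l = l\<^sub>1 + \<cdots> + l\<^sub>n\<close> into positive parts, i.e. over the ways of cutting a word of
  length \<open>l\<close> into \<open>n\<close> nonempty factors.\<close>

lemma sum_word_map_bracket_letter_length:
  assumes "h None = 0"
  shows "(\<Sum>y\<in>{y \<in> words_of_weight (wnorm wt u). length y = Suc n}. h (ibr br y) * word_map (bracket_letter g) y u)
       = h (ibr br u) * fps_nth (nonconst_fps g ^ Suc n) (length u)"
  using assms
proof (induct n arbitrary: h u)
  case 0
  thus ?case by (rule sum_word_map_bracket_letter_length_1)
next
  case (Suc n)
  let ?m = "wnorm wt u" and ?L = "bracket_letter g" and ?P = "\<lambda>l. fps_nth (nonconst_fps g ^ Suc n) l"
  have "(\<Sum>y\<in>{y \<in> words_of_weight ?m. length y = Suc (Suc n)}. h (ibr br y) * word_map ?L y u)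
      = (\<Sum>c\<in>{c. wt c \<le> ?m}. \<Sum>i\<le>length u. ?L c (take i u) * h (br_opt (Some c) (ibr br (drop i u))) * ?P (length u - i))"
    unfolding sum_word_map_length_Suc_Suc[OF weight_preserving_bracket_letter]
  proof (intro sum.cong refl)
    fix c i
    show "?L c (take i u) * (\<Sum>y\<in>{y \<in> words_of_weight (wnorm wt (drop i u)). length y = Suc n}.
          h (br_opt (Some c) (ibr br y)) * word_map ?L y (drop i u))
        = ?L c (take i u) * h (br_opt (Some c) (ibr br (drop i u))) * ?P (length u - i)"
      using Suc.hyps[of "\<lambda>x. h (br_opt (Some c) x)" "drop i u"] Suc.prems by simp
  qed
  also have "\<dots> = (\<Sum>i\<le>length u. fps_nth (nonconst_fps g) i * h (ibr br u) * ?P (length u - i))"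
  proof (subst sum.swap, intro sum.cong refl)
    fix i assume "i \<in> {..length u}"
    moreover have "{c. wt c = wnorm wt (take i u)} \<subseteq> {c. wt c \<le> ?m}"
      using wnorm_take_drop[of wt i u] by auto
    ultimately show "(\<Sum>c\<in>{c. wt c \<le> ?m}. ?L c (take i u) * h (br_opt (Some c) (ibr br (drop i u))) * ?P (length u - i))
        = fps_nth (nonconst_fps g) i * h (ibr br u) * ?P (length u - i)"
      using sum_bracket_letter_split[where h=h and i=i and u=u and C="{c. wt c \<le> ?m}" and g=g] Suc.prems
      by (cases "i = length u") (auto simp: finite_wt_le simp flip: sum_distrib_right)
  qed
  also have "\<dots> = h (ibr br u) * fps_nth (nonconst_fps g ^ Suc (Suc n)) (length u)"
    unfolding power_Suc[of "nonconst_fps g" "Suc n"] fps_mult_nth atLeast0AtMost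
    by (simp add: sum_distrib_left algebra_simps)
  finally show ?case .
qed

lemma sum_word_map_bracket_letter_inverse:
  assumes "nonconst_fps f oo nonconst_fps g = fps_X"
  shows "(\<Sum>y\<in>words_of_weight (wnorm wt u). bracket_letter f c y * word_map (bracket_letter g) y u)
       = (if u = [c] then 1 else 0)"
proof -
  define m where "m = wnorm wt u"
  define h where "h x = (if x = Some c then 1 else (0::real))" for x
  have h0: "h None = 0" by (simp add: h_def)
  have "(\<Sum>y\<in>words_of_weight m. bracket_letter f c y * word_map (bracket_letter g) y u)
      = (\<Sum>y\<in>words_of_weight m. f (length y) * (h (ibr br y) * word_map (bracket_letter g) y u))"
    by (intro sum.cong) (auto simp: bracket_letter_def h_def)
  also have "\<dots> = (\<Sum>n\<le>m. \<Sum>y\<in>{y \<in> words_of_weight m. length y = n}.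
           f (length y) * (h (ibr br y) * word_map (bracket_letter g) y u))"
    by (rule sum.group[symmetric]) (auto intro: order_trans[OF length_le_wnorm])
  also have "\<dots> = (\<Sum>n\<in>{1..m}. f n * (h (ibr br u) * fps_nth (nonconst_fps g ^ n) (length u)))"
  proof (rule sum.mono_neutral_cong_right)
    show "\<forall>n\<in>{..m} - {1..m}. (\<Sum>y\<in>{y \<in> words_of_weight m. length y = n}.
        f (length y) * (h (ibr br y) * word_map (bracket_letter g) y u)) = 0"
      using h0 by (auto intro!: sum.neutral simp: Suc_le_eq)
    fix n assume "n \<in> {1..m}"
    then obtain k where "n = Suc k" by (cases n) auto
    thus "(\<Sum>y\<in>{y \<in> words_of_weight m. length y = n}.
        f (length y) * (h (ibr br y) * word_map (bracket_letter g) y u))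
        = f n * (h (ibr br u) * fps_nth (nonconst_fps g ^ n) (length u))"
      using sum_word_map_bracket_letter_length[where h=h and u=u and n=k and g=g] h0
      by (simp add: m_def flip: sum_distrib_left)
  qed auto
  also have "\<dots> = (if u = [c] then 1 else 0)"
  proof (cases "u = []")
    case False
    hence "1 \<le> length u" "length u \<le> m" using length_le_wnorm[of u] by (auto simp: m_def Suc_le_eq)
    hence "(\<Sum>n\<in>{1..m}. f n * fps_nth (nonconst_fps g ^ n) (length u))
        = fps_nth (nonconst_fps f oo nonconst_fps g) (length u)"
      unfolding fps_compose_nth
      by (intro sum.mono_neutral_cong) (auto simp: nonconst_fps_power_nth_less)
    thus ?thesis
      using False unfolding assms
      by (auto simp: h_def length_Suc_conv sum_distrib_left algebra_simps simp flip: sum_distrib_left)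
  qed (simp add: h0)
  finally show ?thesis unfolding m_def .
qed

lemma weight_preserving_phi: "weight_preserving (phi_letter br)"
  and weight_preserving_psi: "weight_preserving (psi_letter br)"
  by (simp_all add: phi_letter_eq psi_letter_eq weight_preserving_bracket_letter)

lemma adj_map_psi_word_map_phi:
  "adj_map (psi_letter br) wt (word_map (phi_letter br) a) = (\<lambda>u. if u = a then 1 else 0)"
proof (intro adj_map_word_map_delta[OF weight_preserving_psi] ext)
  show "adj_map (psi_letter br) wt (phi_letter br c) u = (if u = [c] then 1 else 0)" for c u
    unfolding adj_map_apply phi_letter_eq psi_letter_eq
    by (rule sum_word_map_bracket_letter_inverse[OF fps_exp_minus_1_compose_ln])
qed

lemma adj_map_phi_word_map_psi:
  "adj_map (phi_letter br) wt (word_map (psi_letter br) a) = (\<lambda>u. if u = a then 1 else 0)"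
proof (intro adj_map_word_map_delta[OF weight_preserving_phi] ext)
  show "adj_map (phi_letter br) wt (psi_letter br c) u = (if u = [c] then 1 else 0)" for c u
    unfolding adj_map_apply phi_letter_eq psi_letter_eq
    by (rule sum_word_map_bracket_letter_inverse[OF fps_ln_compose_exp_minus_1])
qed

lemma PsiH_PhiH [simp]: "PsiH br wt (PhiH br wt X) = X"
  unfolding PhiH_def PsiH_def by (rule adj_map_inverse[OF adj_map_psi_word_map_phi])

lemma PhiH_PsiH [simp]: "PhiH br wt (PsiH br wt X) = X"
  unfolding PhiH_def PsiH_def by (rule adj_map_inverse[OF adj_map_phi_word_map_psi])

lemma PhiH_trunc_space_iff: "PhiH br wt X \<in> trunc_space wt N \<longleftrightarrow> X \<in> trunc_space wt N"
  using adj_map_trunc_space PsiH_PhiH unfolding PhiH_def PsiH_def by metis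

lemma PhiH_eq_zero_iff: "PhiH br wt X = (\<lambda>_. 0) \<longleftrightarrow> X = (\<lambda>_. 0)"
proof -
  have zero: "adj_map L wt (\<lambda>_. 0) = (\<lambda>_. 0)" for L
    by (simp add: adj_map_def fun_eq_iff)
  show ?thesis using zero[of "phi_letter br"] zero[of "psi_letter br"] PsiH_PhiH[of X]
    unfolding PhiH_def PsiH_def by metis
qed

lemma PhiH_tprod_iff:
  "tprod wt N (PhiH br wt X) (PhiH br wt Y) = PhiH br wt Z \<longleftrightarrow> tprod wt N X Y = Z"
  using adj_map_tprod[OF weight_preserving_phi, of N X Y] PsiH_PhiH
  unfolding PhiH_def PsiH_def by metis

lemma PhiH_cprod_iff: "cprod (PhiH br wt X) (PhiH br wt Y) = PhiH br wt Z \<longleftrightarrow> cprod X Y = Z"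
  using adj_map_cprod[OF weight_preserving_phi, of X Y] PsiH_PhiH
  unfolding PhiH_def PsiH_def by metis

lemma smooth_coords_PhiH_iff: "smooth_coords Q S (\<lambda>t. PhiH br wt (X t)) \<longleftrightarrow> smooth_coords Q S X"
proof
  assume "smooth_coords Q S (\<lambda>t. PhiH br wt (X t))"
  from smooth_coords_adj_map[OF this, of "psi_letter br"] show "smooth_coords Q S X"
    by (simp flip: PsiH_def)
qed (simp add: PhiH_def smooth_coords_adj_map)

end

section \<open>Characters\<close>

context bracket_weight
begin

text \<open>\<^const>\<open>qsh\<close> and \<^const>\<open>sh\<close> recurse on last letters, \<^const>\<open>qshr\<close> on first letters:
  reversal of words passes between them, and \<^term>\<open>phi_letter br\<close> is reversal invariant.\<close>

lemma word_map_phi_rev: "word_map (phi_letter br) y (rev z) = word_map (phi_letter br) (rev y) z"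
  using word_map_rev[of "phi_letter br" "rev y" z] by simp

lemma wnorm_qsh: "z \<in> set (qsh br v w) \<Longrightarrow> wnorm wt z = wnorm wt v + wnorm wt w"
  using wnorm_qshr[of br wt, OF wt_br] by (fastforce simp: qsh_def)

lemma count_qsh: "count_list (qsh br v w) y = count_list (qsh_coprod (rev y)) (rev v, rev w)"
proof -
  have "count_list (qsh br v w) y = count_list (map rev (qshr br (rev v) (rev w))) (rev (rev y))"
    by (simp add: qsh_def)
  also have "\<dots> = count_list (qshr br (rev v) (rev w)) (rev y)"
    by (rule count_list_map_conv) (simp add: inj_def)
  finally show ?thesis by (simp add: count_qsh_coprod)
qed

lemma sum_qsh_coprod_rev:
  "(\<Sum>(v0, w0)\<leftarrow>qsh_coprod (rev y). word_map (phi_letter br) v0 (rev v) * word_map (phi_letter br) w0 (rev w))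
   = (\<Sum>(a, b)\<in>words_of_weight (wnorm wt v) \<times> words_of_weight (wnorm wt w).
        real (count_list (qsh br a b) y) * (word_map (phi_letter br) a v * word_map (phi_letter br) b w))"
proof -
  let ?G = "\<lambda>(a, b). word_map (phi_letter br) a v * word_map (phi_letter br) b w"
  let ?revp = "\<lambda>(a, b). (rev a, rev b :: 'a list)"
  have "inj ?revp" by (auto simp: inj_def)
  hence count: "count_list (map ?revp xs) (a, b) = count_list xs (rev a, rev b)" for xs a b
    using count_list_map_conv[of ?revp xs "(rev a, rev b)"] by simp
  have "(\<Sum>(v0, w0)\<leftarrow>qsh_coprod (rev y). word_map (phi_letter br) v0 (rev v) * word_map (phi_letter br) w0 (rev w))
      = (\<Sum>p\<leftarrow>map ?revp (qsh_coprod (rev y)). ?G p)"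
    by (simp add: word_map_phi_rev o_def case_prod_unfold)
  also have "\<dots> = (\<Sum>p\<in>words_of_weight (wnorm wt v) \<times> words_of_weight (wnorm wt w).
      real (count_list (map ?revp (qsh_coprod (rev y))) p) * ?G p)"
    using word_map_weight[OF weight_preserving_phi]
    by (intro sum_list_map_eq_sum_count_support) (auto simp: case_prod_unfold mem_Times_iff)
  also have "\<dots> = (\<Sum>(a, b)\<in>words_of_weight (wnorm wt v) \<times> words_of_weight (wnorm wt w).
      real (count_list (qsh br a b) y) * ?G (a, b))"
    by (intro sum.cong) (auto simp: count count_qsh)
  finally show ?thesis by (simp add: case_prod_unfold)
qed

lemma pair_PhiH_sh:
  "pair (PhiH br wt X) (sh v w) = (\<Sum>a\<in>words_of_weight (wnorm wt v). \<Sum>b\<in>words_of_weight (wnorm wt w).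
      word_map (phi_letter br) a v * word_map (phi_letter br) b w * pair X (qsh br a b))"
proof -
  let ?W = "word_map (phi_letter br)" and ?n = "wnorm wt v + wnorm wt w"
  let ?S = "words_of_weight (wnorm wt v) \<times> words_of_weight (wnorm wt w)"
  have "pair (PhiH br wt X) (sh v w) = (\<Sum>z\<leftarrow>shr (rev v) (rev w). PhiH br wt X (rev z))"
    by (simp add: pair_def sh_def qsh_def o_def)
  also have "\<dots> = (\<Sum>z\<leftarrow>shr (rev v) (rev w). \<Sum>y\<in>words_of_weight ?n. X y * ?W (rev y) z)"
  proof (intro arg_cong[where f=sum_list] map_cong refl)
    fix z assume "z \<in> set (shr (rev v) (rev w))"
    hence "wnorm wt (rev z) = ?n" using wnorm_shr by fastforce
    thus "PhiH br wt X (rev z) = (\<Sum>y\<in>words_of_weight ?n. X y * ?W (rev y) z)"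
      by (simp add: PhiH_def adj_map_apply word_map_phi_rev)
  qed
  also have "\<dots> = (\<Sum>y\<in>words_of_weight ?n. X y * (\<Sum>(a, b)\<in>?S. real (count_list (qsh br a b) y) * (?W a v * ?W b w)))"
    by (simp add: sum_list_sum_swap sum_list_const_mult sum_shr_word_map_phi sum_qsh_coprod_rev)
  also have "\<dots> = (\<Sum>(a, b)\<in>?S. ?W a v * ?W b w * (\<Sum>y\<in>words_of_weight ?n. real (count_list (qsh br a b) y) * X y))"
    by (simp add: sum_distrib_left sum_distrib_right algebra_simps sum.swap[of _ ?S] case_prod_unfold)
  also have "\<dots> = (\<Sum>(a, b)\<in>?S. ?W a v * ?W b w * pair X (qsh br a b))"
    by (intro sum.cong refl)
       (auto simp: pair_def mem_Times_iff wnorm_qsh intro!: sum_list_map_eq_sum_count_support[symmetric])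
  finally show ?thesis by (simp add: sum.cartesian_product)
qed

lemma pair_PhiH_sh_minus:
  "pair (PhiH br wt X) (sh v w) - PhiH br wt X v * PhiH br wt X w
   = (\<Sum>a\<in>words_of_weight (wnorm wt v). \<Sum>b\<in>words_of_weight (wnorm wt w).
        word_map (phi_letter br) a v * word_map (phi_letter br) b w * (pair X (qsh br a b) - X a * X b))"
proof -
  have "PhiH br wt X v * PhiH br wt X w = (\<Sum>a\<in>words_of_weight (wnorm wt v). \<Sum>b\<in>words_of_weight (wnorm wt w).
      word_map (phi_letter br) a v * word_map (phi_letter br) b w * (X a * X b))"
    unfolding PhiH_def adj_map_apply sum_product by (simp add: mult_ac)
  thus ?thesis unfolding pair_PhiH_sh by (simp add: sum_subtractf right_diff_distrib)
qed

definition character_on :: "(nat \<Rightarrow> bool) \<Rightarrow> ('a list \<Rightarrow> 'a list \<Rightarrow> 'a list list) \<Rightarrow> 'a series \<Rightarrow> bool" where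
  "character_on Q P X \<longleftrightarrow> (\<forall>v w. Q (wnorm wt v + wnorm wt w) \<longrightarrow> pair X (P v w) = X v * X w)"

lemma character_on_PhiH:
  assumes "character_on Q (qsh br) X"
  shows "character_on Q sh (PhiH br wt X)"
  unfolding character_on_def
proof (intro allI impI)
  fix v w assume "Q (wnorm wt v + wnorm wt w)"
  hence "pair (PhiH br wt X) (sh v w) - PhiH br wt X v * PhiH br wt X w = 0"
    using assms unfolding pair_PhiH_sh_minus character_on_def by (intro sum.neutral ballI) auto
  thus "pair (PhiH br wt X) (sh v w) = PhiH br wt X v * PhiH br wt X w" by simp
qed

text \<open>The converse inverts \<open>\<Phi>\<^sub>H\<^sup>* \<otimes> \<Phi>\<^sub>H\<^sup>*\<close> on pairs of words by \<open>\<Psi>\<^sub>H\<^sup>* \<otimes> \<Psi>\<^sub>H\<^sup>*\<close>.\<close>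

lemma character_on_PhiH_imp:
  assumes "character_on Q sh (PhiH br wt X)"
  shows "character_on Q (qsh br) X"
  unfolding character_on_def
proof (intro allI impI)
  fix v w assume Q: "Q (wnorm wt v + wnorm wt w)"
  let ?S = "words_of_weight (wnorm wt v) \<times> words_of_weight (wnorm wt w)"
  define D where "D p = pair X (qsh br (fst p) (snd p)) - X (fst p) * X (snd p)" for p
  define K where "K p p' = word_map (phi_letter br) (fst p) (fst p') * word_map (phi_letter br) (snd p) (snd p')" for p p'
  define L where "L p' = word_map (psi_letter br) (fst p') v * word_map (psi_letter br) (snd p') w" for p'
  have KD: "(\<Sum>p\<in>?S. K p p' * D p) = 0" if "p' \<in> ?S" for p'
  proof -
    have "(\<Sum>p\<in>?S. K p p' * D p)
        = pair (PhiH br wt X) (sh (fst p') (snd p')) - PhiH br wt X (fst p') * PhiH br wt X (snd p')"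
      unfolding pair_PhiH_sh_minus using that
      by (simp add: K_def D_def sum.cartesian_product case_prod_unfold mem_Times_iff)
    thus ?thesis using assms Q that by (simp add: character_on_def mem_Times_iff)
  qed
  have KL: "(\<Sum>p'\<in>?S. K p p' * L p') = (if p = (v, w) then 1 else 0)" for p
  proof -
    have "(\<Sum>p'\<in>?S. K p p' * L p')
        = adj_map (psi_letter br) wt (word_map (phi_letter br) (fst p)) v
        * adj_map (psi_letter br) wt (word_map (phi_letter br) (snd p)) w"
      unfolding adj_map_apply sum_product sum.cartesian_product K_def L_def
      by (intro sum.cong refl) (auto simp: algebra_simps)
    thus ?thesis unfolding adj_map_psi_word_map_phi by (cases p) auto
  qed
  have "D (v, w) = (\<Sum>p\<in>?S. D p * (\<Sum>p'\<in>?S. K p p' * L p'))"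
    unfolding KL by (simp add: if_distrib[of "(*) _"] sum.delta' mem_Times_iff cong: if_cong)
  also have "\<dots> = (\<Sum>p\<in>?S. \<Sum>p'\<in>?S. L p' * (K p p' * D p))"
    by (simp add: sum_distrib_left sum_distrib_right mult_ac)
  also have "\<dots> = (\<Sum>p'\<in>?S. L p' * (\<Sum>p\<in>?S. K p p' * D p))"
    by (subst sum.swap) (simp add: sum_distrib_left)
  also have "\<dots> = 0" by (simp add: KD)
  finally show "pair X (qsh br v w) = X v * X w" by (simp add: D_def)
qed

lemma character_on_PhiH_iff: "character_on Q sh (PhiH br wt X) \<longleftrightarrow> character_on Q (qsh br) X"
  using character_on_PhiH character_on_PhiH_imp by blast

end

context bracket_weight
begin

lemma N_grp_iff: "N_grp P wt N T X \<longleftrightarrow>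
    (\<forall>t\<in>{0..T}. X t \<in> trunc_space wt N \<and> X t \<noteq> (\<lambda>_. 0) \<and> character_on (\<lambda>k. k \<le> N) P (X t))
    \<and> smooth_coords (\<lambda>k. k \<le> N) {0..T} X"
  unfolding N_grp_def character_on_def smooth_coords_def by blast

lemma grp_iff: "grp P T X \<longleftrightarrow>
    (\<forall>t\<in>{0..T}. X t \<noteq> (\<lambda>_. 0) \<and> character_on (\<lambda>_. True) P (X t))
    \<and> smooth_coords (\<lambda>_. True) {0..T} X"
  unfolding grp_def character_on_def smooth_coords_def by blast

lemma N_grm_iff: "N_grm P wt N T X \<longleftrightarrow>
    (\<forall>s\<in>{0..T}. \<forall>t\<in>{0..T}. X s t \<in> trunc_space wt N \<and> X s t \<noteq> (\<lambda>_. 0)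
       \<and> character_on (\<lambda>k. k \<le> N) P (X s t))
    \<and> (\<forall>s\<in>{0..T}. \<forall>u\<in>{0..T}. \<forall>t\<in>{0..T}. tprod wt N (X s u) (X u t) = X s t)
    \<and> (\<forall>s\<in>{0..T}. smooth_coords (\<lambda>k. k \<le> N) {0..T} (X s))"
  unfolding N_grm_def character_on_def smooth_coords_def by blast

lemma grm_iff: "grm P T X \<longleftrightarrow>
    (\<forall>s\<in>{0..T}. \<forall>t\<in>{0..T}. X s t \<noteq> (\<lambda>_. 0) \<and> character_on (\<lambda>_. True) P (X s t))
    \<and> (\<forall>s\<in>{0..T}. \<forall>u\<in>{0..T}. \<forall>t\<in>{0..T}. cprod (X s u) (X u t) = X s t)
    \<and> (\<forall>s\<in>{0..T}. smooth_coords (\<lambda>_. True) {0..T} (X s))"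
  unfolding grm_def character_on_def smooth_coords_def by blast

lemma N_sqgrp_iff_N_sgrp_PhiH: "N_sqgrp br wt N T X \<longleftrightarrow> N_sgrp wt N T (\<lambda>t. PhiH br wt (X t))"
  by (simp add: N_grp_iff PhiH_trunc_space_iff PhiH_eq_zero_iff character_on_PhiH_iff smooth_coords_PhiH_iff)

lemma sqgrp_iff_sgrp_PhiH: "sqgrp br T X \<longleftrightarrow> sgrp T (\<lambda>t. PhiH br wt (X t))"
  by (simp add: grp_iff PhiH_eq_zero_iff character_on_PhiH_iff smooth_coords_PhiH_iff)

lemma N_sqgrm_iff_N_sgrm_PhiH: "N_sqgrm br wt N T X \<longleftrightarrow> N_sgrm wt N T (\<lambda>s t. PhiH br wt (X s t))"
  by (simp add: N_grm_iff PhiH_trunc_space_iff PhiH_eq_zero_iff character_on_PhiH_iff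
      smooth_coords_PhiH_iff PhiH_tprod_iff)

lemma sqgrm_iff_sgrm_PhiH: "sqgrm br T X \<longleftrightarrow> sgrm T (\<lambda>s t. PhiH br wt (X s t))"
  by (simp add: grm_iff PhiH_eq_zero_iff character_on_PhiH_iff smooth_coords_PhiH_iff PhiH_cprod_iff)

end

theorem theorem3p9:
  fixes br :: "'a \<Rightarrow> 'a \<Rightarrow> 'a option" and wt :: "'a \<Rightarrow> nat"
  assumes "bracket_weight_ok br wt"
  shows
   "(\<forall>(N::nat) (T::real) (X :: real \<Rightarrow> 'a series).
       (\<forall>t\<in>{0..T}. X t \<in> trunc_space wt N) \<longrightarrow>
       (N_sqgrp br wt N T X \<longleftrightarrow> N_sgrp wt N T (\<lambda>t. PhiH br wt (X t)))) \<and>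
    (\<forall>(N::nat) (T::real) (Xh :: real \<Rightarrow> 'a series).
       (\<forall>t\<in>{0..T}. Xh t \<in> trunc_space wt N) \<longrightarrow>
       (N_sgrp wt N T Xh \<longleftrightarrow> N_sqgrp br wt N T (\<lambda>t. PsiH br wt (Xh t)))) \<and>
    (\<forall>(N::nat) (T::real) (X :: real \<Rightarrow> real \<Rightarrow> 'a series).
       (\<forall>s\<in>{0..T}. \<forall>t\<in>{0..T}. X s t \<in> trunc_space wt N) \<longrightarrow>
       (N_sqgrm br wt N T X \<longleftrightarrow> N_sgrm wt N T (\<lambda>s t. PhiH br wt (X s t)))) \<and>
    (\<forall>(N::nat) (T::real) (Xh :: real \<Rightarrow> real \<Rightarrow> 'a series).
       (\<forall>s\<in>{0..T}. \<forall>t\<in>{0..T}. Xh s t \<in> trunc_space wt N) \<longrightarrow>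
       (N_sgrm wt N T Xh \<longleftrightarrow> N_sqgrm br wt N T (\<lambda>s t. PsiH br wt (Xh s t)))) \<and>
    (\<forall>(T::real) (X :: real \<Rightarrow> 'a series).
       sqgrp br T X \<longleftrightarrow> sgrp T (\<lambda>t. PhiH br wt (X t))) \<and>
    (\<forall>(T::real) (Xh :: real \<Rightarrow> 'a series).
       sgrp T Xh \<longleftrightarrow> sqgrp br T (\<lambda>t. PsiH br wt (Xh t))) \<and>
    (\<forall>(T::real) (X :: real \<Rightarrow> real \<Rightarrow> 'a series).
       sqgrm br T X \<longleftrightarrow> sgrm T (\<lambda>s t. PhiH br wt (X s t))) \<and>
    (\<forall>(T::real) (Xh :: real \<Rightarrow> real \<Rightarrow> 'a series).
       sgrm T Xh \<longleftrightarrow> sqgrm br T (\<lambda>s t. PsiH br wt (Xh s t)))"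
proof -
  interpret bracket_weight br wt by unfold_locales (rule assms)
  \<comment> \<open>The \<open>\<Psi>\<^sub>H\<^sup>*\<close>
    statements are the \<open>\<Phi>\<^sub>H\<^sup>*\<close> ones for \<open>\<Psi>\<^sub>H\<^sup>* X\<close>, simplified by \<open>PhiH_PsiH\<close>.\<close>
  show ?thesis
    by (simp add: N_sqgrp_iff_N_sgrp_PhiH sqgrp_iff_sgrp_PhiH N_sqgrm_iff_N_sgrm_PhiH sqgrm_iff_sgrm_PhiH)
qed

end
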